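(* Let $X$ be an Alexandroff space. Then for each $x\in X$, there is at most one basic set $S(y)$ ($y\in X$) with $S(y)\subseteq S(x)$.
   Context: A topological space $X$ is an Alexandroff space if arbitrary intersections of open sets are open. In an Alexandroff space, $S(x)$ denotes the minimal open neighborhood of $x$, i.e. the intersection of all open sets containing $x$, which is open. $S(x)$ is called basic if for all $y,z\in X$: whenever $S(x)\subseteq S(y)$ and $S(z)\subseteq S(y)$ then $S(x)\subseteq S(z)$; and whenever $S(x)\not\subseteq S(y)$ then $S(x)\cap S(y)=\emptyset$. *)

theory Defs
  imports "HOL-Analysis.Analysis"
begin

text \<open>Alexandroff space: arbitrary intersections of open sets are open
  (the empty intersection is read as the whole space).\<close>
definition alexandroff_space :: "'a topology \<Rightarrow> bool" where
  "alexandroff_space X \<longleftrightarrow>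
     (\<forall>\<U>. (\<forall>U\<in>\<U>. openin X U) \<longrightarrow> openin X (topspace X \<inter> \<Inter>\<U>))"

definition minnbhd :: "'a topology \<Rightarrow> 'a \<Rightarrow> 'a set" where
  "minnbhd X x = topspace X \<inter> \<Inter>{U. openin X U \<and> x \<in> U}"

definition basic_nbhd :: "'a topology \<Rightarrow> 'a \<Rightarrow> bool" where
  "basic_nbhd X x \<longleftrightarrow>
     (\<forall>y\<in>topspace X. \<forall>z\<in>topspace X.
        (minnbhd X x \<subseteq> minnbhd X y \<and> minnbhd X z \<subseteq> minnbhd X y \<longrightarrow> minnbhd X x \<subseteq> minnbhd X z) \<and>
        (\<not> minnbhd X x \<subseteq> minnbhd X y \<longrightarrow> minnbhd X x \<inter> minnbhd X y = {}))"

end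

theory Submission
  imports Defs
begin

lemma basic_nbhd_subset_minnbhd:
  assumes "basic_nbhd X y" "x \<in> topspace X" "z \<in> topspace X"
    and "minnbhd X y \<subseteq> minnbhd X x" "minnbhd X z \<subseteq> minnbhd X x"
  shows "minnbhd X y \<subseteq> minnbhd X z"
  using assms unfolding basic_nbhd_def by (meson subset_trans)

theorem theorem16:
  fixes X :: "'a topology" and x :: 'a
  assumes "alexandroff_space X" and "x \<in> topspace X"
  shows "\<forall>y1\<in>topspace X. \<forall>y2\<in>topspace X.
           basic_nbhd X y1 \<and> minnbhd X y1 \<subseteq> minnbhd X x \<and>
           basic_nbhd X y2 \<and> minnbhd X y2 \<subseteq> minnbhd X x
           \<longrightarrow> minnbhd X y1 = minnbhd X y2"
proof (intro ballI impI)
  fix y1 y2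
  assume "y1 \<in> topspace X" "y2 \<in> topspace X"
    and "basic_nbhd X y1 \<and> minnbhd X y1 \<subseteq> minnbhd X x \<and>
              basic_nbhd X y2 \<and> minnbhd X y2 \<subseteq> minnbhd X x"
  then have "minnbhd X y1 \<subseteq> minnbhd X y2" "minnbhd X y2 \<subseteq> minnbhd X y1"
    using basic_nbhd_subset_minnbhd[OF _ assms(2)] by simp_all
  then show "minnbhd X y1 = minnbhd X y2" ..
qed

end
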